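(* Let $p\geq 2$ be an integer. Then $\mathcal{M}_3^p=\mathcal{M}_2^p\times_{\gamma_2}\mathcal{M}_2^p$; that is, $c=c_1+c_2\mathbf{i_3}\in\mathbb{M}(3)$ (with $c_1,c_2\in\mathbb{M}(2)$) lies in $\mathcal{M}_3^p$ if and only if both $c_1-c_2\mathbf{i_2}\in\mathcal{M}_2^p$ and $c_1+c_2\mathbf{i_2}\in\mathcal{M}_2^p$.
   Context: The tricomplex numbers $\mathbb{M}(3)$ form the commutative real algebra generated by commuting units $\mathbf{i_1},\mathbf{i_2},\mathbf{i_3}$ with $\mathbf{i_k}^2=-1$; set $\mathbf{j_1}=\mathbf{i_1}\mathbf{i_2}$, $\mathbf{j_2}=\mathbf{i_1}\mathbf{i_3}$, $\mathbf{j_3}=\mathbf{i_2}\mathbf{i_3}$, $\mathbf{i_4}=\mathbf{i_1}\mathbf{i_2}\mathbf{i_3}$. It has real basis $1,\mathbf{i_1},\mathbf{i_2},\mathbf{i_3},\mathbf{i_4},\mathbf{j_1},\mathbf{j_2},\mathbf{j_3}$ and norm $\|\cdot\|_3$ equal to the Euclidean norm of the 8 real coordinates. The bicomplex numbers $\mathbb{M}(2)$ are the subalgebra spanned by $1,\mathbf{i_1},\mathbf{i_2},\mathbf{j_1}$, with norm $\|\cdot\|_2$ the Euclidean norm of its 4 coordinates; every $\eta\in\mathbb{M}(3)$ is uniquely $\zeta_1+\zeta_2\mathbf{i_3}$ with $\zeta_1,\zeta_2\in\mathbb{M}(2)$. With $\gamma_2=\frac{1+\mathbf{j_3}}{2}$,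 $\overline{\gamma}_2=\frac{1-\mathbf{j_3}}{2}$, one has $\eta=(\zeta_1-\zeta_2\mathbf{i_2})\gamma_2+(\zeta_1+\zeta_2\mathbf{i_2})\overline{\gamma}_2$. For $X_1,X_2\subseteq\mathbb{M}(2)$, $X_1\times_{\gamma_2}X_2=\{u_1\gamma_2+u_2\overline{\gamma}_2 : u_1\in X_1,u_2\in X_2\}$. For $n\in\{2,3\}$ and $c\in\mathbb{M}(n)$, $Q_{p,c}(\eta)=\eta^p+c$, $Q_{p,c}^m$ its $m$-fold iterate, and $\mathcal{M}_n^p=\{c\in\mathbb{M}(n) : (Q_{p,c}^m(0))_{m\geq1}\text{ is bounded in }\|\cdot\|_n\}$. *)

theory Defs
  imports Complex_Main
begin

text \<open>A bicomplex number z1 + z2 i2 with z1, z2 complex numbers in the variable i1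
  (the complex unit of type complex plays the role of i1). Real coordinates:
  1 = Re z1, i1 = Im z1, i2 = Re z2, j1 = i1 i2 = Im z2.\<close>

datatype bicomplex = BC (bc1: complex) (bc2: complex)

instantiation bicomplex :: comm_ring_1
begin
definition "0 = BC 0 0"
definition "1 = BC 1 0"
definition "x + y = BC (bc1 x + bc1 y) (bc2 x + bc2 y)"
definition "x - y = BC (bc1 x - bc1 y) (bc2 x - bc2 y)"
definition "- x = BC (- bc1 x) (- bc2 x)"
definition "x * y = BC (bc1 x * bc1 y - bc2 x * bc2 y) (bc1 x * bc2 y + bc2 x * bc1 y)"
instance
  by standard (auto simp: zero_bicomplex_def one_bicomplex_def plus_bicomplex_def
      minus_bicomplex_def uminus_bicomplex_def times_bicomplex_def algebra_simps
      intro!: bicomplex.expand)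
end

definition bc_i2 :: bicomplex where "bc_i2 = BC 0 1"

definition bc_norm :: "bicomplex \<Rightarrow> real" where
  "bc_norm z = sqrt ((Re (bc1 z))\<^sup>2 + (Im (bc1 z))\<^sup>2 + (Re (bc2 z))\<^sup>2 + (Im (bc2 z))\<^sup>2)"

text \<open>A tricomplex number zeta1 + zeta2 i3 with zeta1, zeta2 bicomplex.\<close>

datatype tricomplex = TC (tc1: bicomplex) (tc2: bicomplex)

instantiation tricomplex :: comm_ring_1
begin
definition "0 = TC 0 0"
definition "1 = TC 1 0"
definition "x + y = TC (tc1 x + tc1 y) (tc2 x + tc2 y)"
definition "x - y = TC (tc1 x - tc1 y) (tc2 x - tc2 y)"
definition "- x = TC (- tc1 x) (- tc2 x)"
definition "x * y = TC (tc1 x * tc1 y - tc2 x * tc2 y) (tc1 x * tc2 y + tc2 x * tc1 y)"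
instance
  by standard (auto simp: zero_tricomplex_def one_tricomplex_def plus_tricomplex_def
      minus_tricomplex_def uminus_tricomplex_def times_tricomplex_def algebra_simps
      intro!: tricomplex.expand)
end

definition tc_of_bc :: "bicomplex \<Rightarrow> tricomplex" where "tc_of_bc z = TC z 0"

definition tc_i2 :: tricomplex where "tc_i2 = tc_of_bc bc_i2"
definition tc_i3 :: tricomplex where "tc_i3 = TC 0 1"
definition tc_j3 :: tricomplex where "tc_j3 = tc_i2 * tc_i3"

definition tc_half :: tricomplex where "tc_half = tc_of_bc (BC (1/2) 0)"
definition gamma2 :: tricomplex where "gamma2 = tc_half * (1 + tc_j3)"
definition gamma2_bar :: tricomplex where "gamma2_bar = tc_half * (1 - tc_j3)"

text \<open>Euclidean norm of the 8 real coordinates: the coordinates of zeta1 (on 1,i1,i2,j1)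
  together with those of zeta2 (on i3, j2, j3, i4).\<close>
definition tc_norm :: "tricomplex \<Rightarrow> real" where
  "tc_norm x = sqrt ((bc_norm (tc1 x))\<^sup>2 + (bc_norm (tc2 x))\<^sup>2)"

definition times_gamma2 :: "bicomplex set \<Rightarrow> bicomplex set \<Rightarrow> tricomplex set" where
  "times_gamma2 X1 X2 =
     {tc_of_bc u1 * gamma2 + tc_of_bc u2 * gamma2_bar | u1 u2. u1 \<in> X1 \<and> u2 \<in> X2}"

definition Q :: "nat \<Rightarrow> 'a::comm_ring_1 \<Rightarrow> 'a \<Rightarrow> 'a" where
  "Q p c \<eta> = \<eta> ^ p + c"

definition multibrot2 :: "nat \<Rightarrow> bicomplex set" where
  "multibrot2 p = {c. \<exists>B. \<forall>m\<ge>1. bc_norm ((Q p c ^^ m) 0) \<le> B}"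

definition multibrot3 :: "nat \<Rightarrow> tricomplex set" where
  "multibrot3 p = {c. \<exists>B. \<forall>m\<ge>1. tc_norm ((Q p c ^^ m) 0) \<le> B}"

end

theory Submission
  imports Defs
begin

text \<open>Since \<open>gamma2\<close> and \<open>gamma2_bar\<close> are orthogonal idempotents summing to 1, the coordinates
  \<open>\<zeta>\<^sub>1 - \<zeta>\<^sub>2 i\<^sub>2\<close> and \<open>\<zeta>\<^sub>1 + \<zeta>\<^sub>2 i\<^sub>2\<close> of \<open>\<eta> = \<zeta>\<^sub>1 + \<zeta>\<^sub>2 i\<^sub>3\<close> in this basis are ring
  homomorphisms \<open>\<bbbM>(3) \<rightarrow> \<bbbM>(2)\<close>; hence they carry the orbit of 0 under \<open>Q p c\<close> to the orbits
  of 0 under \<open>Q p\<close> at the two coordinates of \<open>c\<close>. The squared norms of the two coordinates add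
  up to twice the squared norm of \<open>\<eta>\<close>, so the tricomplex orbit is bounded exactly when both
  bicomplex orbits are.\<close>

lemma Q_iterate_hom:
  fixes h :: "'a::comm_ring_1 \<Rightarrow> 'b::comm_ring_1"
  assumes add: "\<And>x y. h (x + y) = h x + h y"
    and mult: "\<And>x y. h (x * y) = h x * h y"
    and one: "h 1 = 1"
  shows "h ((Q p c ^^ m) 0) = (Q p (h c) ^^ m) 0"
proof -
  have "h 0 = 0"
    using add[of 0 0] by simp
  moreover have "h (x ^ n) = h x ^ n" for x n
    by (induction n) (simp_all add: one mult)
  ultimately show ?thesis
    by (induction m) (simp_all add: Q_def add)
qed

lemma le_twice_if_sum_squares_eq:
  fixes a b t :: real
  assumes "a\<^sup>2 + b\<^sup>2 = 2 * t\<^sup>2" "0 \<le> t"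
  shows "a \<le> 2 * t"
proof -
  have "a\<^sup>2 \<le> a\<^sup>2 + b\<^sup>2"
    by simp
  also have "\<dots> \<le> (2 * t)\<^sup>2"
    unfolding assms(1) by (simp add: power_mult_distrib)
  finally have "a\<^sup>2 \<le> (2 * t)\<^sup>2" .
  then show ?thesis
    by (rule power2_le_imp_le) (use assms(2) in simp)
qed

lemma le_sum_if_sum_squares_eq:
  fixes a b t :: real
  assumes "a\<^sup>2 + b\<^sup>2 = 2 * t\<^sup>2" "0 \<le> a" "0 \<le> b"
  shows "t \<le> a + b"
proof -
  have "t\<^sup>2 \<le> (a + b)\<^sup>2"
    using assms by (simp add: power2_sum)
  then show ?thesis
    by (rule power2_le_imp_le) (use assms(2,3) in simp)
qed

definition gamma2_coord :: "tricomplex \<Rightarrow> bicomplex" where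
  "gamma2_coord x = tc1 x - tc2 x * bc_i2"
definition gamma2_bar_coord :: "tricomplex \<Rightarrow> bicomplex" where
  "gamma2_bar_coord x = tc1 x + tc2 x * bc_i2"

lemma bc_i2_squared: "bc_i2 * bc_i2 = -1"
  by (simp add: bc_i2_def times_bicomplex_def one_bicomplex_def uminus_bicomplex_def)

lemma times_bc_i2: "z * bc_i2 = BC (- bc2 z) (bc1 z)"
  by (simp add: bc_i2_def times_bicomplex_def)

lemma gamma2_eq: "gamma2 = TC (BC (1/2) 0) (BC 0 (1/2))"
  by (simp add: gamma2_def tc_half_def tc_j3_def tc_i2_def tc_i3_def tc_of_bc_def bc_i2_def
      times_tricomplex_def plus_tricomplex_def one_tricomplex_def times_bicomplex_def
      plus_bicomplex_def one_bicomplex_def zero_bicomplex_def minus_bicomplex_def)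

lemma gamma2_bar_eq: "gamma2_bar = TC (BC (1/2) 0) (BC 0 (-1/2))"
  by (simp add: gamma2_bar_def tc_half_def tc_j3_def tc_i2_def tc_i3_def tc_of_bc_def bc_i2_def
      times_tricomplex_def minus_tricomplex_def one_tricomplex_def times_bicomplex_def
      minus_bicomplex_def one_bicomplex_def zero_bicomplex_def plus_bicomplex_def)

lemma gamma2_coord_combination:
  "gamma2_coord (tc_of_bc u1 * gamma2 + tc_of_bc u2 * gamma2_bar) = u1"
  by (cases u1; cases u2)
     (simp add: gamma2_coord_def gamma2_eq gamma2_bar_eq tc_of_bc_def bc_i2_def
      times_tricomplex_def plus_tricomplex_def times_bicomplex_def plus_bicomplex_def
      minus_bicomplex_def zero_bicomplex_def field_simps)

lemma gamma2_bar_coord_combination: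
  "gamma2_bar_coord (tc_of_bc u1 * gamma2 + tc_of_bc u2 * gamma2_bar) = u2"
  by (cases u1; cases u2)
     (simp add: gamma2_bar_coord_def gamma2_eq gamma2_bar_eq tc_of_bc_def bc_i2_def
      times_tricomplex_def plus_tricomplex_def times_bicomplex_def plus_bicomplex_def
      minus_bicomplex_def zero_bicomplex_def field_simps)

lemma idempotent_decomposition:
  "tc_of_bc (gamma2_coord x) * gamma2 + tc_of_bc (gamma2_bar_coord x) * gamma2_bar = x"
proof -
  obtain a1 a2 b1 b2 where "x = TC (BC a1 a2) (BC b1 b2)"
    by (metis bicomplex.exhaust tricomplex.exhaust)
  then show ?thesis
    by (simp add: gamma2_coord_def gamma2_bar_coord_def gamma2_eq gamma2_bar_eq tc_of_bc_def
        bc_i2_def times_tricomplex_def plus_tricomplex_def times_bicomplex_def plus_bicomplex_def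
        minus_bicomplex_def uminus_bicomplex_def zero_bicomplex_def field_simps)
qed

lemma times_gamma2_eq: "times_gamma2 X1 X2 = {x. gamma2_coord x \<in> X1 \<and> gamma2_bar_coord x \<in> X2}"
  unfolding times_gamma2_def
  by (auto simp: gamma2_coord_combination gamma2_bar_coord_combination)
     (metis idempotent_decomposition)

lemma bc_norm_squared:
  "(bc_norm z)\<^sup>2 = (Re (bc1 z))\<^sup>2 + (Im (bc1 z))\<^sup>2 + (Re (bc2 z))\<^sup>2 + (Im (bc2 z))\<^sup>2"
  by (simp add: bc_norm_def)

lemma tc_norm_squared: "(tc_norm x)\<^sup>2 = (bc_norm (tc1 x))\<^sup>2 + (bc_norm (tc2 x))\<^sup>2"
  by (simp add: tc_norm_def)

lemma norm_gamma2_coords: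
  "(bc_norm (gamma2_coord x))\<^sup>2 + (bc_norm (gamma2_bar_coord x))\<^sup>2 = 2 * (tc_norm x)\<^sup>2"
  unfolding tc_norm_squared bc_norm_squared
  by (simp add: gamma2_coord_def gamma2_bar_coord_def times_bc_i2
      minus_bicomplex_def plus_bicomplex_def power2_eq_square del: mult_minus_left)
     (simp add: algebra_simps)

lemma gamma2_coord_add: "gamma2_coord (x + y) = gamma2_coord x + gamma2_coord y"
  by (simp add: gamma2_coord_def plus_tricomplex_def algebra_simps)

lemma gamma2_bar_coord_add: "gamma2_bar_coord (x + y) = gamma2_bar_coord x + gamma2_bar_coord y"
  by (simp add: gamma2_bar_coord_def plus_tricomplex_def algebra_simps)

lemma gamma2_coord_mult: "gamma2_coord (x * y) = gamma2_coord x * gamma2_coord y"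
proof -
  have "gamma2_coord x * gamma2_coord y
      = tc1 x * tc1 y + tc2 x * tc2 y * (bc_i2 * bc_i2) - (tc1 x * tc2 y + tc2 x * tc1 y) * bc_i2"
    by (simp add: gamma2_coord_def algebra_simps)
  then show ?thesis
    by (simp add: gamma2_coord_def times_tricomplex_def bc_i2_squared)
qed

lemma gamma2_bar_coord_mult: "gamma2_bar_coord (x * y) = gamma2_bar_coord x * gamma2_bar_coord y"
proof -
  have "gamma2_bar_coord x * gamma2_bar_coord y
      = tc1 x * tc1 y + tc2 x * tc2 y * (bc_i2 * bc_i2) + (tc1 x * tc2 y + tc2 x * tc1 y) * bc_i2"
    by (simp add: gamma2_bar_coord_def algebra_simps)
  then show ?thesis
    by (simp add: gamma2_bar_coord_def times_tricomplex_def bc_i2_squared)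
qed

lemma gamma2_coord_1: "gamma2_coord 1 = 1"
  by (simp add: gamma2_coord_def one_tricomplex_def)

lemma gamma2_bar_coord_1: "gamma2_bar_coord 1 = 1"
  by (simp add: gamma2_bar_coord_def one_tricomplex_def)

lemma bc_norm_gamma2_coord_le: "bc_norm (gamma2_coord x) \<le> 2 * tc_norm x"
  by (rule le_twice_if_sum_squares_eq[OF norm_gamma2_coords]) (simp add: tc_norm_def)

lemma bc_norm_gamma2_bar_coord_le: "bc_norm (gamma2_bar_coord x) \<le> 2 * tc_norm x"
  by (rule le_twice_if_sum_squares_eq[OF trans[OF add.commute norm_gamma2_coords]])
     (simp add: tc_norm_def)

lemma tc_norm_le_gamma2_coords: "tc_norm x \<le> bc_norm (gamma2_coord x) + bc_norm (gamma2_bar_coord x)"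
  by (rule le_sum_if_sum_squares_eq[OF norm_gamma2_coords]) (simp_all add: bc_norm_def)

lemma multibrot3_iff_gamma2_coords:
  "c \<in> multibrot3 p \<longleftrightarrow> gamma2_coord c \<in> multibrot2 p \<and> gamma2_bar_coord c \<in> multibrot2 p"
proof -
  let ?z = "\<lambda>m. (Q p c ^^ m) 0"
  have orbit: "(Q p (gamma2_coord c) ^^ m) 0 = gamma2_coord (?z m)"
    "(Q p (gamma2_bar_coord c) ^^ m) 0 = gamma2_bar_coord (?z m)" for m
    by (rule Q_iterate_hom[symmetric],
        simp_all add: gamma2_coord_add gamma2_coord_mult gamma2_coord_1
          gamma2_bar_coord_add gamma2_bar_coord_mult gamma2_bar_coord_1)+
  show ?thesis
  proof
    assume "c \<in> multibrot3 p"
    then obtain B where B: "tc_norm (?z m) \<le> B" if "m \<ge> 1" for m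
      unfolding multibrot3_def by auto
    have "bc_norm (gamma2_coord (?z m)) \<le> 2 * B" "bc_norm (gamma2_bar_coord (?z m)) \<le> 2 * B"
      if "m \<ge> 1" for m
      using B[OF that] bc_norm_gamma2_coord_le[of "?z m"] bc_norm_gamma2_bar_coord_le[of "?z m"]
      by linarith+
    then show "gamma2_coord c \<in> multibrot2 p \<and> gamma2_bar_coord c \<in> multibrot2 p"
      unfolding multibrot2_def
      by (intro conjI CollectI exI[of _ "2 * B"] allI impI) (simp_all add: orbit)
  next
    assume "gamma2_coord c \<in> multibrot2 p \<and> gamma2_bar_coord c \<in> multibrot2 p"
    then obtain B1 B2
      where "bc_norm (gamma2_coord (?z m)) \<le> B1" "bc_norm (gamma2_bar_coord (?z m)) \<le> B2"
        if "m \<ge> 1" for m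
      unfolding multibrot2_def mem_Collect_eq orbit by blast
    then have "tc_norm (?z m) \<le> B1 + B2" if "m \<ge> 1" for m
      using that tc_norm_le_gamma2_coords[of "?z m"] by (meson add_mono order_trans)
    then show "c \<in> multibrot3 p"
      unfolding multibrot3_def by (intro CollectI exI[of _ "B1 + B2"] allI impI) simp
  qed
qed

theorem mainTheorem12:
  fixes p :: nat
  assumes "p \<ge> 2"
  shows "multibrot3 p = times_gamma2 (multibrot2 p) (multibrot2 p)
     \<and> (\<forall>c1 c2. TC c1 c2 \<in> multibrot3 p \<longleftrightarrow>
           (c1 - c2 * bc_i2 \<in> multibrot2 p \<and> c1 + c2 * bc_i2 \<in> multibrot2 p))"
proof -
  have "multibrot3 p = times_gamma2 (multibrot2 p) (multibrot2 p)"
    unfolding times_gamma2_eq by (rule set_eqI) (simp add: multibrot3_iff_gamma2_coords)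
  moreover have "TC c1 c2 \<in> multibrot3 p \<longleftrightarrow>
      c1 - c2 * bc_i2 \<in> multibrot2 p \<and> c1 + c2 * bc_i2 \<in> multibrot2 p" for c1 c2
    by (simp add: multibrot3_iff_gamma2_coords gamma2_coord_def gamma2_bar_coord_def)
  ultimately show ?thesis
    by blast
qed

end
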